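(* Let $H$ be a graph and let $A, B \subseteq V(H)$ be disjoint such that $(H,A,B)$ has property $\mathcal{P}$. Let $H^*\coloneqq H - E_H(A,B)$, $A' \coloneqq \{x \in A \colon d_{H}(x) \geq 4\}$ and $B' \coloneqq N_H(A \setminus A')$. Then $S(H) = (S(H^* ) \setminus B') \cup A'$, $P(H) = P(H^* ) \cup B'$, and $R(H) = R(H^* ) \setminus A'$.
   Context: For a graph $G$ and $X\subseteq V(G)$, $N_G(X)=\{x\in V(G)\setminus X: xy\in E(G)\text{ for some }y\in X\}$, $N_G(x)=N_G(\{x\})$, $d_G(x)$ is the degree, $\mathrm{dist}_G$ is graph distance; $E_G(X)$ is the set of edges inside $X$, $E_G(X,Y)$ the set of edges with one endpoint in $X$ and the other in $Y$, and $G-E'$ deletes the edge set $E'$. The strong $4$-core $S(G)$ is the maximal $X\subseteq V(G)$ with $|N_G(x)\cap X|\geq 4$ for all $x\in X\cup N_G(X)$; $P(G)=N_G(S(G))$ and $R(G)=V(G)\setminus(S(G)\cup P(G))$. A set $B$ has the robust sapphire property for $G$ if (RS1) every $x\in B\cup N_G(B)$ satisfies $\{x\}\cup N_G(x)\subseteq S(G)$ and $d_G(x)\ge5$, and (RS2) distinct $b_1,b_2\in B$ satisfy $\mathrm{dist}_G(b_1,b_2)\ge5$. For a graph $H$ and disjoint $A,B\subseteq V(H)$, with $H^*=H-E_H(A,B)$, $(H,A,B)$ has property $\mathcal{P}$ if: (P1) $E_H(A)=E_H(B)=\varnothing$; (P2) $H[A\cup B]$ is a union of stars and $|N_H(b)\cap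 A|\le 1$ for each $b\in B$; (P3) every vertex of $A$ is isolated in $H^*$; (P4) $B$ has the robust sapphire property for $H^*$. *)

theory Defs
  imports Main "HOL-Library.Extended_Nat"
begin

definition graph :: "'a set \<Rightarrow> 'a set set \<Rightarrow> bool" where
  "graph V E \<longleftrightarrow> finite V \<and> (\<forall>e\<in>E. e \<subseteq> V \<and> card e = 2)"

definition nbr :: "'a set \<Rightarrow> 'a set set \<Rightarrow> 'a \<Rightarrow> 'a set" where
  "nbr V E x = {y\<in>V. y \<noteq> x \<and> {x, y} \<in> E}"

definition nbrs :: "'a set \<Rightarrow> 'a set set \<Rightarrow> 'a set \<Rightarrow> 'a set" where
  "nbrs V E X = {x\<in>V - X. \<exists>y\<in>X. {x, y} \<in> E}"

definition deg :: "'a set \<Rightarrow> 'a set set \<Rightarrow> 'a \<Rightarrow> nat" where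
  "deg V E x = card (nbr V E x)"

fun walk :: "'a set set \<Rightarrow> nat \<Rightarrow> 'a \<Rightarrow> 'a \<Rightarrow> bool" where
  "walk E 0 x y \<longleftrightarrow> x = y"
| "walk E (Suc n) x y \<longleftrightarrow> (\<exists>z. {x, z} \<in> E \<and> walk E n z y)"

definition dist :: "'a set set \<Rightarrow> 'a \<Rightarrow> 'a \<Rightarrow> enat" where
  "dist E x y = (if \<exists>n. walk E n x y then enat (LEAST n. walk E n x y) else \<infinity>)"

definition edges_in :: "'a set set \<Rightarrow> 'a set \<Rightarrow> 'a set set" where
  "edges_in E X = {e\<in>E. e \<subseteq> X}"

definition edges_between :: "'a set set \<Rightarrow> 'a set \<Rightarrow> 'a set \<Rightarrow> 'a set set" where
  "edges_between E X Y = {e\<in>E. \<exists>x\<in>X. \<exists>y\<in>Y. e = {x, y}}"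

text \<open>Strong 4-core: the maximal (= largest, since the property is closed under
  unions) X \<subseteq> V with at least 4 neighbours in X for all x in X \<union> N(X).\<close>
definition core_prop :: "'a set \<Rightarrow> 'a set set \<Rightarrow> 'a set \<Rightarrow> bool" where
  "core_prop V E X \<longleftrightarrow> X \<subseteq> V \<and>
     (\<forall>x\<in>X \<union> nbrs V E X. card (nbr V E x \<inter> X) \<ge> 4)"

definition S4 :: "'a set \<Rightarrow> 'a set set \<Rightarrow> 'a set" where
  "S4 V E = \<Union>{X. core_prop V E X}"

definition P4 :: "'a set \<Rightarrow> 'a set set \<Rightarrow> 'a set" where
  "P4 V E = nbrs V E (S4 V E)"

definition R4 :: "'a set \<Rightarrow> 'a set set \<Rightarrow> 'a set" where
  "R4 V E = V - (S4 V E \<union> P4 V E)"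

definition robust_sapphire :: "'a set \<Rightarrow> 'a set set \<Rightarrow> 'a set \<Rightarrow> bool" where
  "robust_sapphire V E B \<longleftrightarrow>
     (\<forall>x\<in>B \<union> nbrs V E B. insert x (nbr V E x) \<subseteq> S4 V E \<and> deg V E x \<ge> 5) \<and>
     (\<forall>b1\<in>B. \<forall>b2\<in>B. b1 \<noteq> b2 \<longrightarrow> dist E b1 b2 \<ge> 5)"

definition is_star :: "'a set \<Rightarrow> 'a set set \<Rightarrow> bool" where
  "is_star C F \<longleftrightarrow> (\<exists>c\<in>C. F = {{c, v} | v. v \<in> C - {c}})"

definition component :: "'a set set \<Rightarrow> 'a \<Rightarrow> 'a set" where
  "component F x = {y. (\<lambda>u v. {u, v} \<in> F)\<^sup>*\<^sup>* x y}"

definition union_of_stars :: "'a set \<Rightarrow> 'a set set \<Rightarrow> bool" where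
  "union_of_stars W F \<longleftrightarrow>
     (\<forall>x\<in>W. is_star (component F x) (edges_in F (component F x)))"

definition propP :: "'a set \<Rightarrow> 'a set set \<Rightarrow> 'a set \<Rightarrow> 'a set \<Rightarrow> bool" where
  "propP V E A B \<longleftrightarrow>
     (let Es = E - edges_between E A B in
       edges_in E A = {} \<and> edges_in E B = {} \<and>
       union_of_stars (A \<union> B) (edges_in E (A \<union> B)) \<and>
       (\<forall>b\<in>B. card (nbr V E b \<inter> A) \<le> 1) \<and>
       (\<forall>a\<in>A. nbr V Es a = {}) \<and>
       robust_sapphire V Es B)"

end

theory Submission
  imports Defs
begin

(* Let T be the strong 4-core of H* and X = (T - B') \<union> A'. Then X has the strong 4-core
   property in H: a vertex outside A near T keeps its core neighbours when the A-B edges are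
   added back, except that a neighbour in B' is removed; by the distance condition (RS2) it has
   at most one neighbour in B, and the degree bound 5 of (RS1) compensates for it. A vertex of
   A' only sees B - B', which lies in T. Conversely (S(H) - A) \<union> T has the strong 4-core
   property in H*, since vertices outside A \<union> B keep their neighbourhoods, while S(H) meets A
   only in A' (degree at least 4) and avoids B', the neighbours of A - A'. So S(H) = X;
   comparing neighbourhoods of X gives P(H), and R(H) follows from B' \<subseteq> B \<subseteq> T. *)

lemma S4_maximal: "core_prop V E X \<Longrightarrow> X \<subseteq> S4 V E"
  by (auto simp: S4_def)

lemma S4_subset: "S4 V E \<subseteq> V"
  by (auto simp: S4_def core_prop_def)

lemma finite_nbr: "finite V \<Longrightarrow> finite (nbr V E x)"
  by (rule finite_subset[of _ V]) (auto simp: nbr_def)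

lemma core_prop_S4:
  assumes "finite V"
  shows "core_prop V E (S4 V E)"
proof -
  have "4 \<le> card (nbr V E x \<inter> S4 V E)" if x: "x \<in> S4 V E \<union> nbrs V E (S4 V E)" for x
  proof -
    obtain X where X: "core_prop V E X" "x \<in> X \<union> nbrs V E X"
    proof (cases "x \<in> S4 V E")
      case True
      then show ?thesis using that by (auto simp: S4_def)
    next
      case False
      then obtain y where "y \<in> S4 V E" "{x, y} \<in> E" "x \<in> V"
        using x by (auto simp: nbrs_def)
      then obtain X where "core_prop V E X" "y \<in> X" by (auto simp: S4_def)
      moreover have "x \<notin> X" using False \<open>core_prop V E X\<close> S4_maximal by blast
      ultimately show ?thesis using that[of X] \<open>{x, y} \<in> E\<close> \<open>x \<in> V\<close>
        by (auto simp: nbrs_def)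
    qed
    then have "4 \<le> card (nbr V E x \<inter> X)" by (auto simp: core_prop_def)
    also have "\<dots> \<le> card (nbr V E x \<inter> S4 V E)"
      using finite_nbr[OF assms] S4_maximal[OF X(1)] by (intro card_mono) auto
    finally show ?thesis .
  qed
  then show ?thesis using S4_subset[of V E] unfolding core_prop_def by blast
qed

lemma core_prop_deg_ge_4:
  assumes "finite V" "core_prop V E X" "x \<in> X \<union> nbrs V E X"
  shows "4 \<le> deg V E x"
proof -
  have "4 \<le> card (nbr V E x \<inter> X)" using assms(2,3) by (auto simp: core_prop_def)
  also have "\<dots> \<le> deg V E x"
    unfolding deg_def using finite_nbr[OF assms(1)] by (intro card_mono) auto
  finally show ?thesis .
qed

lemma graph_edgeD:
  assumes "graph V E" "{x, y} \<in> E"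
  shows "x \<in> V" "y \<in> V" "x \<noteq> y"
proof -
  have "{x, y} \<subseteq> V" "card {x, y} = 2" using assms by (auto simp: graph_def)
  then show "x \<in> V" "y \<in> V" "x \<noteq> y" by (cases "x = y", auto)+
qed

lemma dist_le_2:
  assumes "{x, y} \<in> E" "{y, z} \<in> E"
  shows "dist E x z \<le> 2"
proof -
  have walk: "walk E 2 x z" using assms by (auto simp: numeral_2_eq_2)
  then have "(LEAST n. walk E n x z) \<le> 2" by (rule Least_le)
  then show ?thesis using walk unfolding dist_def by (auto simp: numeral_eq_enat)
qed

lemma robust_sapphire_subset_S4: "robust_sapphire V E B \<Longrightarrow> B \<subseteq> S4 V E"
  by (auto simp: robust_sapphire_def)

lemma robust_sapphire_common_nbr:
  assumes "robust_sapphire V E B" "b1 \<in> B" "b2 \<in> B" "b1 \<in> nbr V E x" "b2 \<in> nbr V E x"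
  shows "b1 = b2"
proof (rule ccontr)
  assume "b1 \<noteq> b2"
  then have "5 \<le> dist E b1 b2" using assms(1-3) by (auto simp: robust_sapphire_def)
  moreover have "dist E b1 b2 \<le> 2"
    using assms(4,5) by (intro dist_le_2[of _ x]) (auto simp: nbr_def insert_commute)
  ultimately have "(5::enat) \<le> 2" by (rule order.trans)
  then show False by (simp add: numeral_eq_enat)
qed

locale property_P =
  fixes V :: "'a set" and E :: "'a set set" and A B :: "'a set"
  assumes graph: "graph V E"
    and A_subset: "A \<subseteq> V"
    and disjoint: "A \<inter> B = {}"
    and propP: "propP V E A B"
begin

definition Es :: "'a set set" where
  "Es = E - edges_between E A B"

definition A' :: "'a set" where
  "A' = {x\<in>A. deg V E x \<ge> 4}"

definition B' :: "'a set" where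
  "B' = nbrs V E (A - A')"

lemma finite_V: "finite V"
  using graph by (simp add: graph_def)

lemma no_edge_in_B: "x \<in> B \<Longrightarrow> y \<in> B \<Longrightarrow> {x, y} \<notin> E"
  using propP by (auto simp: propP_def Let_def edges_in_def)

lemma card_nbr_inter_A: "b \<in> B \<Longrightarrow> card (nbr V E b \<inter> A) \<le> 1"
  using propP by (auto simp: propP_def Let_def)

lemma nbr_Es_A: "a \<in> A \<Longrightarrow> nbr V Es a = {}"
  using propP by (auto simp: propP_def Let_def Es_def)

lemma robust_sapphire_Es: "robust_sapphire V Es B"
  using propP by (auto simp: propP_def Let_def Es_def)

lemma Es_subset: "Es \<subseteq> E"
  by (auto simp: Es_def)

lemma edge_Es_iff:
  "{x, y} \<in> Es \<longleftrightarrow> {x, y} \<in> E \<and> \<not> (x \<in> A \<and> y \<in> B) \<and> \<not> (y \<in> A \<and> x \<in> B)"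
  by (auto simp: Es_def edges_between_def doubleton_eq_iff)

lemma edge_from_A:
  assumes "a \<in> A" "{a, y} \<in> E"
  shows "y \<in> B"
proof (rule ccontr)
  assume "y \<notin> B"
  then have "{a, y} \<in> Es" using assms disjoint by (auto simp: edge_Es_iff)
  then have "y \<in> nbr V Es a" using graph_edgeD[OF graph assms(2)] by (simp add: nbr_def)
  then show False using nbr_Es_A[OF assms(1)] by simp
qed

lemma nbr_Es: "x \<notin> A \<Longrightarrow> nbr V Es x = nbr V E x - A"
  using nbr_Es_A graph_edgeD[OF graph] Es_subset
  by (auto simp: nbr_def edge_Es_iff insert_commute)

lemma nbr_outside_B_disjoint_A: "x \<notin> B \<Longrightarrow> nbr V E x \<inter> A = {}"
  using edge_from_A[of _ x] by (auto simp: nbr_def insert_commute)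

lemma nbr_Es_outside: "x \<notin> A \<Longrightarrow> x \<notin> B \<Longrightarrow> nbr V Es x = nbr V E x"
  using nbr_Es nbr_outside_B_disjoint_A by blast

lemma B_subset_S4_Es: "B \<subseteq> S4 V Es"
  using robust_sapphire_subset_S4[OF robust_sapphire_Es] .

lemma A_outside_S4_Es:
  assumes "a \<in> A"
  shows "a \<notin> S4 V Es \<union> P4 V Es"
proof
  assume "a \<in> S4 V Es \<union> P4 V Es"
  then have "4 \<le> card (nbr V Es a \<inter> S4 V Es)"
    using core_prop_S4[OF finite_V, of Es] by (auto simp: core_prop_def P4_def)
  then show False using nbr_Es_A[OF assms] by simp
qed

lemma B'_subset_B: "B' \<subseteq> B"
  using edge_from_A by (auto simp: B'_def nbrs_def insert_commute)

lemma nbr_A'_notin_B':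
  assumes "a \<in> A'" "{a, b} \<in> E"
  shows "b \<notin> B'"
proof
  assume "b \<in> B'"
  then obtain a2 where a2: "a2 \<in> A - A'" "{b, a2} \<in> E" by (auto simp: B'_def nbrs_def)
  have "b \<in> B" using assms edge_from_A by (auto simp: A'_def)
  have "{a, a2} \<subseteq> nbr V E b \<inter> A"
    using a2 assms graph_edgeD[OF graph] by (auto simp: nbr_def A'_def insert_commute)
  moreover have "a \<noteq> a2" using a2 assms by auto
  ultimately have "2 \<le> card (nbr V E b \<inter> A)"
    using finite_nbr[OF finite_V] card_mono[of "nbr V E b \<inter> A" "{a, a2}"] by auto
  then show False using card_nbr_inter_A[OF \<open>b \<in> B\<close>] by simp
qed

lemma four_le_card_nbr_new_core:
  assumes "x \<notin> A" "x \<in> S4 V Es \<union> P4 V Es"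
  shows "4 \<le> card (nbr V E x \<inter> ((S4 V Es - B') \<union> A'))"
proof (cases "\<exists>b\<in>B'. b \<in> nbr V Es x")
  case False
  have "4 \<le> card (nbr V Es x \<inter> S4 V Es)"
    using core_prop_S4[OF finite_V, of Es] assms(2) by (auto simp: core_prop_def P4_def)
  also have "\<dots> \<le> card (nbr V E x \<inter> ((S4 V Es - B') \<union> A'))"
    using finite_nbr[OF finite_V] False nbr_Es[OF assms(1)] by (intro card_mono) auto
  finally show ?thesis .
next
  case True
  then obtain b where b: "b \<in> B'" "b \<in> nbr V Es x" by blast
  then have "b \<in> B" using B'_subset_B by auto
  have "{x, b} \<in> Es" "x \<in> V" using b(2) Es_subset graph_edgeD[OF graph] by (auto simp: nbr_def)
  moreover have "x \<notin> B" using no_edge_in_B[OF _ \<open>b \<in> B\<close>] \<open>{x, b} \<in> Es\<close> Es_subset by auto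
  ultimately have "x \<in> nbrs V Es B" using \<open>b \<in> B\<close> by (auto simp: nbrs_def)
  then have core: "nbr V Es x \<subseteq> S4 V Es" and "5 \<le> deg V Es x"
    using robust_sapphire_Es by (auto simp: robust_sapphire_def)
  \<comment> \<open>By (RS2), b is the only neighbour of x in B, so of the at least 5 neighbours of x
    at least 4 lie in the new core.\<close>
  then have "4 \<le> card (nbr V Es x - {b})"
    using b(2) finite_nbr[OF finite_V] by (simp add: deg_def card_Diff_singleton)
  also have "\<dots> \<le> card (nbr V E x \<inter> ((S4 V Es - B') \<union> A'))"
  proof (rule card_mono)
    show "finite (nbr V E x \<inter> ((S4 V Es - B') \<union> A'))"
      using finite_nbr[OF finite_V] by auto
    show "nbr V Es x - {b} \<subseteq> nbr V E x \<inter> ((S4 V Es - B') \<union> A')"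
    proof
      fix y assume y: "y \<in> nbr V Es x - {b}"
      then have "y \<notin> B"
        using robust_sapphire_common_nbr[OF robust_sapphire_Es _ \<open>b \<in> B\<close> _ b(2)] by auto
      then show "y \<in> nbr V E x \<inter> ((S4 V Es - B') \<union> A')"
        using y core B'_subset_B nbr_Es[OF assms(1)] by auto
    qed
  qed
  finally show ?thesis .
qed

lemma A_near_new_core_in_A':
  assumes "a \<in> A" "a \<in> ((S4 V Es - B') \<union> A') \<union> nbrs V E ((S4 V Es - B') \<union> A')"
  shows "a \<in> A'"
proof (rule ccontr)
  assume "a \<notin> A'"
  then have "a \<in> nbrs V E ((S4 V Es - B') \<union> A')"
    using assms A_outside_S4_Es by auto
  then obtain y where y: "y \<in> (S4 V Es - B') \<union> A'" "{a, y} \<in> E" by (auto simp: nbrs_def)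
  have "y \<in> B" using edge_from_A[OF assms(1) y(2)] .
  then have "y \<in> B'"
    using assms(1) \<open>a \<notin> A'\<close> y(2) graph_edgeD[OF graph] disjoint
    by (auto simp: B'_def nbrs_def insert_commute)
  then show False using y(1) \<open>y \<in> B\<close> disjoint by (auto simp: A'_def)
qed

lemma nbr_A'_subset_new_core: "a \<in> A' \<Longrightarrow> nbr V E a \<subseteq> (S4 V Es - B') \<union> A'"
  using edge_from_A nbr_A'_notin_B' B_subset_S4_Es by (fastforce simp: nbr_def A'_def)

lemma near_new_core_outside_A:
  assumes "x \<notin> A" "x \<in> ((S4 V Es - B') \<union> A') \<union> nbrs V E ((S4 V Es - B') \<union> A')"
  shows "x \<in> S4 V Es \<union> P4 V Es"
proof (cases "x \<in> (S4 V Es - B') \<union> A' \<or> x \<in> S4 V Es")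
  case True
  then show ?thesis using assms(1) by (auto simp: A'_def)
next
  case False
  then obtain y where y: "y \<in> (S4 V Es - B') \<union> A'" "{x, y} \<in> E" "x \<in> V"
    using assms(2) by (auto simp: nbrs_def)
  have "y \<notin> A"
    using edge_from_A[of y x] y(2) False B_subset_S4_Es by (auto simp: insert_commute)
  then have "y \<in> S4 V Es" using y(1) by (auto simp: A'_def)
  moreover have "{x, y} \<in> Es" using y(2) assms(1) \<open>y \<notin> A\<close> by (simp add: edge_Es_iff)
  ultimately show ?thesis using False y(3) by (auto simp: P4_def nbrs_def)
qed

lemma core_prop_new_core: "core_prop V E ((S4 V Es - B') \<union> A')"
  unfolding core_prop_def
proof (intro conjI ballI)
  show "(S4 V Es - B') \<union> A' \<subseteq> V"
    using S4_subset[of V Es] A_subset by (auto simp: A'_def)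
next
  fix x assume x: "x \<in> ((S4 V Es - B') \<union> A') \<union> nbrs V E ((S4 V Es - B') \<union> A')"
  show "4 \<le> card (nbr V E x \<inter> ((S4 V Es - B') \<union> A'))"
  proof (cases "x \<in> A")
    case True
    then have "x \<in> A'" using A_near_new_core_in_A' x by blast
    then show ?thesis
      using nbr_A'_subset_new_core[of x] by (simp add: A'_def deg_def Int_absorb2)
  next
    case False
    then show ?thesis
      using four_le_card_nbr_new_core near_new_core_outside_A x by blast
  qed
qed

lemma S4_inter_A: "S4 V E \<inter> A \<subseteq> A'"
  using core_prop_deg_ge_4[OF finite_V core_prop_S4[OF finite_V]] by (auto simp: A'_def)

lemma S4_disjoint_B': "S4 V E \<inter> B' = {}"
proof (rule ccontr)
  assume "S4 V E \<inter> B' \<noteq> {}"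
  then obtain b a where b: "b \<in> S4 V E" and a: "a \<in> A - A'" "{b, a} \<in> E"
    by (auto simp: B'_def nbrs_def)
  have "a \<in> S4 V E \<union> nbrs V E (S4 V E)"
    using b a graph_edgeD[OF graph] by (auto simp: nbrs_def insert_commute)
  then have "4 \<le> deg V E a" by (rule core_prop_deg_ge_4[OF finite_V core_prop_S4[OF finite_V]])
  then show False using a by (auto simp: A'_def)
qed

lemma near_old_core_outside_S4_Es:
  assumes "x \<in> ((S4 V E - A) \<union> S4 V Es) \<union> nbrs V Es ((S4 V E - A) \<union> S4 V Es)"
    and "x \<notin> S4 V Es \<union> P4 V Es"
  shows "x \<notin> A" "x \<in> S4 V E \<union> nbrs V E (S4 V E)"
proof -
  have "x \<notin> A \<and> x \<in> S4 V E \<union> nbrs V E (S4 V E)"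
  proof (cases "x \<in> (S4 V E - A) \<union> S4 V Es")
    case True
    then show ?thesis using assms(2) by auto
  next
    case False
    then obtain y where y: "y \<in> (S4 V E - A) \<union> S4 V Es" "{x, y} \<in> Es" "x \<in> V"
      using assms(1) by (auto simp: nbrs_def)
    have "y \<notin> S4 V Es" using y assms(2) False by (auto simp: P4_def nbrs_def)
    moreover have "x \<notin> A"
    proof
      assume "x \<in> A"
      have "{x, y} \<in> E" using y(2) Es_subset by auto
      then have "y \<in> nbr V Es x" using y(2) graph_edgeD[OF graph, of x y] by (auto simp: nbr_def)
      then show False using nbr_Es_A[OF \<open>x \<in> A\<close>] by simp
    qed
    ultimately show ?thesis using y False Es_subset by (auto simp: nbrs_def)
  qed
  then show "x \<notin> A" "x \<in> S4 V E \<union> nbrs V E (S4 V E)" by auto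
qed

lemma core_prop_old_core: "core_prop V Es ((S4 V E - A) \<union> S4 V Es)"
  unfolding core_prop_def
proof (intro conjI ballI)
  show "(S4 V E - A) \<union> S4 V Es \<subseteq> V" using S4_subset[of V E] S4_subset[of V Es] by blast
next
  fix x assume x: "x \<in> ((S4 V E - A) \<union> S4 V Es) \<union> nbrs V Es ((S4 V E - A) \<union> S4 V Es)"
  show "4 \<le> card (nbr V Es x \<inter> ((S4 V E - A) \<union> S4 V Es))"
  proof (cases "x \<in> S4 V Es \<union> P4 V Es")
    case True
    then have "4 \<le> card (nbr V Es x \<inter> S4 V Es)"
      using core_prop_S4[OF finite_V, of Es] by (auto simp: core_prop_def P4_def)
    also have "\<dots> \<le> card (nbr V Es x \<inter> ((S4 V E - A) \<union> S4 V Es))"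
      using finite_nbr[OF finite_V] by (intro card_mono) auto
    finally show ?thesis .
  next
    case False
    note x_near = near_old_core_outside_S4_Es[OF x False]
    have "x \<notin> B" using False B_subset_S4_Es by auto
    have "4 \<le> card (nbr V E x \<inter> S4 V E)"
      using core_prop_S4[OF finite_V, of E] x_near(2) by (auto simp: core_prop_def)
    also have "\<dots> \<le> card (nbr V Es x \<inter> ((S4 V E - A) \<union> S4 V Es))"
    proof (rule card_mono)
      show "finite (nbr V Es x \<inter> ((S4 V E - A) \<union> S4 V Es))"
        using finite_nbr[OF finite_V] by blast
      show "nbr V E x \<inter> S4 V E \<subseteq> nbr V Es x \<inter> ((S4 V E - A) \<union> S4 V Es)"
        using nbr_Es_outside[OF x_near(1) \<open>x \<notin> B\<close>] nbr_outside_B_disjoint_A[OF \<open>x \<notin> B\<close>]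
        by blast
    qed
    finally show ?thesis .
  qed
qed

lemma S4_eq: "S4 V E = (S4 V Es - B') \<union> A'"
proof
  show "(S4 V Es - B') \<union> A' \<subseteq> S4 V E" by (rule S4_maximal[OF core_prop_new_core])
  have "S4 V E - A \<subseteq> S4 V Es" using S4_maximal[OF core_prop_old_core] by blast
  then show "S4 V E \<subseteq> (S4 V Es - B') \<union> A'" using S4_inter_A S4_disjoint_B' by blast
qed

lemma nbrs_new_core_subset: "nbrs V E ((S4 V Es - B') \<union> A') \<subseteq> P4 V Es \<union> B'"
proof
  fix y assume "y \<in> nbrs V E ((S4 V Es - B') \<union> A')"
  then obtain z where z: "z \<in> (S4 V Es - B') \<union> A'" "{y, z} \<in> E" "y \<in> V"
    and y: "y \<notin> (S4 V Es - B') \<union> A'"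
    by (auto simp: nbrs_def)
  show "y \<in> P4 V Es \<union> B'"
  proof (rule ccontr)
    assume not_P4_B': "y \<notin> P4 V Es \<union> B'"
    have "y \<notin> A"
    proof
      assume "y \<in> A"
      then have "z \<in> B" using edge_from_A z(2) by (simp add: insert_commute)
      then have "z \<in> B'"
        using \<open>y \<in> A\<close> y z graph_edgeD[OF graph] disjoint
        by (auto simp: B'_def nbrs_def insert_commute)
      then show False using z(1) \<open>z \<in> B\<close> disjoint by (auto simp: A'_def)
    qed
    have "y \<notin> S4 V Es" using y not_P4_B' by auto
    then have "z \<notin> A" using edge_from_A[of z y] z(2) B_subset_S4_Es by (auto simp: insert_commute)
    then have "z \<in> S4 V Es" using z(1) by (auto simp: A'_def)
    moreover have "{y, z} \<in> Es" using z(2) \<open>y \<notin> A\<close> \<open>z \<notin> A\<close> by (simp add: edge_Es_iff)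
    ultimately have "y \<in> P4 V Es" using \<open>y \<notin> S4 V Es\<close> z(3) by (auto simp: P4_def nbrs_def)
    then show False using not_P4_B' by simp
  qed
qed

lemma B'_subset_nbrs_new_core: "B' \<subseteq> nbrs V E ((S4 V Es - B') \<union> A')"
proof
  fix y assume "y \<in> B'"
  then have "y \<in> B" using B'_subset_B by auto
  then have "5 \<le> deg V Es y" "nbr V Es y \<subseteq> S4 V Es"
    using robust_sapphire_Es by (auto simp: robust_sapphire_def)
  then obtain z where z: "z \<in> nbr V Es y" "z \<in> S4 V Es"
    by (metis deg_def card.empty ex_in_conv not_numeral_le_zero subsetD)
  then have "{y, z} \<in> E" using Es_subset by (auto simp: nbr_def)
  then have "z \<notin> B'" using no_edge_in_B \<open>y \<in> B\<close> B'_subset_B by auto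
  moreover have "y \<notin> (S4 V Es - B') \<union> A'"
    using \<open>y \<in> B'\<close> \<open>y \<in> B\<close> disjoint by (auto simp: A'_def)
  ultimately show "y \<in> nbrs V E ((S4 V Es - B') \<union> A')"
    using z \<open>{y, z} \<in> E\<close> graph_edgeD[OF graph] by (auto simp: nbrs_def)
qed

lemma P4_Es_subset_nbrs_new_core: "P4 V Es \<subseteq> nbrs V E ((S4 V Es - B') \<union> A')"
proof
  fix y assume y: "y \<in> P4 V Es"
  then have "y \<notin> A" "y \<notin> S4 V Es" "y \<in> V" using A_outside_S4_Es by (auto simp: P4_def nbrs_def)
  then have "y \<notin> (S4 V Es - B') \<union> A'" by (auto simp: A'_def)
  moreover have "4 \<le> card (nbr V E y \<inter> ((S4 V Es - B') \<union> A'))"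
    using four_le_card_nbr_new_core \<open>y \<notin> A\<close> y by blast
  then obtain z where "z \<in> nbr V E y \<inter> ((S4 V Es - B') \<union> A')"
    by (metis card.empty ex_in_conv not_numeral_le_zero)
  ultimately show "y \<in> nbrs V E ((S4 V Es - B') \<union> A')"
    using \<open>y \<in> V\<close> by (auto simp: nbrs_def nbr_def)
qed

lemma P4_eq: "P4 V E = P4 V Es \<union> B'"
  using nbrs_new_core_subset B'_subset_nbrs_new_core P4_Es_subset_nbrs_new_core
  by (auto simp: P4_def[of V E] S4_eq)

lemma R4_eq: "R4 V E = R4 V Es - A'"
  using B'_subset_B B_subset_S4_Es by (auto simp: R4_def S4_eq P4_eq)

end

theorem proposition6p6:
  fixes V :: "'a set" and E :: "'a set set" and A B :: "'a set"
  assumes "graph V E"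
    and "A \<subseteq> V" and "B \<subseteq> V" and "A \<inter> B = {}"
    and "propP V E A B"
  shows "let Es = E - edges_between E A B;
             A' = {x\<in>A. deg V E x \<ge> 4};
             B' = nbrs V E (A - A')
         in S4 V E = (S4 V Es - B') \<union> A' \<and>
            P4 V E = P4 V Es \<union> B' \<and>
            R4 V E = R4 V Es - A'"
proof -
  interpret property_P V E A B
    using assms(1,2,4,5) by unfold_locales
  show ?thesis
    using S4_eq P4_eq R4_eq unfolding Es_def A'_def B'_def Let_def by simp
qed

end
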